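(* Fix $r>0$ and a tiling of the plane by regular hexagons of side length $r$. For each hexagon (cell) of the tiling, its grid circle is the closed disk of radius $r$ centered at the center of the hexagon (the circumscribed disk of the hexagon). Then every closed disk of radius $r$ in the plane is contained in the union of the grid circles of at most $5$ cells of the tiling. *)

theory Defs
  imports "HOL-Analysis.Analysis"
begin

text \<open>A tiling of the plane by regular
hexagons of side r is, up to a rotation by angle th and a translation by c, the
standard honeycomb: the hexagon centers form the triangular lattice generated by
sqrt 3 * r and sqrt 3 * r * cis(pi/3) (distance between adjacent centers = twice
the apothem = sqrt 3 * r).\<close>

definition hex_centers :: "real \<Rightarrow> complex \<Rightarrow> real \<Rightarrow> complex set" where
  "hex_centers r c th =
     {c + cis th * (of_int a * complex_of_real (sqrt 3 * r)
                    + of_int b * complex_of_real (sqrt 3 * r) * cis (pi / 3)) | a b. True}"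

definition hex_cell :: "real \<Rightarrow> real \<Rightarrow> complex \<Rightarrow> complex set" where
  "hex_cell r th z = convex hull {z + complex_of_real r * cis (th + pi / 6 + real k * pi / 3) | k. k < (6::nat)}"

definition hex_tiling :: "real \<Rightarrow> complex \<Rightarrow> real \<Rightarrow> complex set set" where
  "hex_tiling r c th = hex_cell r th ` hex_centers r c th"

definition grid_circle :: "real \<Rightarrow> complex \<Rightarrow> complex set" where
  "grid_circle r z = cball z r"

end

theory Submission
  imports Defs
begin

text \<open>Write points of the plane as c + cis th * sqrt 3 * r * (x + y cis(pi/3)). Then the
centres are the integer points (x, y), distances are measured by the quadratic form
x^2 + xy + y^2, and a disk of radius r becomes the set where this form is at most 1/3.
Translations by lattice vectors and the rotation by pi/3 preserve the problem, and the
Voronoi hexagon of the origin is the union of six rotated copies of the kite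
0 \<le> x, 0 \<le> y, 2x + y \<le> 1, x + 2y \<le> 1. So it suffices to cover a disk centred in this
kite, and this is done by the disks around the origin and its four neighbours
(1,0), (0,1), (1,-1), (-1,1): the plane is split into a few convex regions, and on each of
them a quadratic estimate shows that a point of the disk is close to one particular
centre.\<close>

section \<open>The quadratic form of the triangular lattice\<close>

definition hex_sqnorm :: "real \<Rightarrow> real \<Rightarrow> real" where
  "hex_sqnorm x y = x * x + x * y + y * y"

lemma hex_sqnorm_commute: "hex_sqnorm x y = hex_sqnorm y x"
  unfolding hex_sqnorm_def by (simp add: algebra_simps)

lemma hex_sqnorm_square_form: "hex_sqnorm x y = (x + y/2) * (x + y/2) + 3/4 * (y * y)"
  unfolding hex_sqnorm_def by (simp add: field_simps)

lemma hex_sqnorm_nonneg: "0 \<le> hex_sqnorm x y"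
  unfolding hex_sqnorm_square_form by simp

lemma hex_sqnorm_rotate: "hex_sqnorm (- y) (x + y) = hex_sqnorm x y"
  unfolding hex_sqnorm_def by (simp add: algebra_simps)

section \<open>Covering a disk centred in the kite\<close>

definition in_kite :: "real \<Rightarrow> real \<Rightarrow> bool" where
  "in_kite a b \<longleftrightarrow> 0 \<le> a \<and> 0 \<le> b \<and> 2 * a + b \<le> 1 \<and> a + 2 * b \<le> 1"

definition in_five_disks :: "real \<Rightarrow> real \<Rightarrow> bool" where
  "in_five_disks s t \<longleftrightarrow> hex_sqnorm s t \<le> 1/3 \<or> hex_sqnorm (s - 1) t \<le> 1/3 \<or>
     hex_sqnorm s (t - 1) \<le> 1/3 \<or> hex_sqnorm (s - 1) (t + 1) \<le> 1/3 \<or>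
     hex_sqnorm (s + 1) (t - 1) \<le> 1/3"

lemma in_kite_commute: "in_kite a b \<longleftrightarrow> in_kite b a"
  unfolding in_kite_def by auto

lemma in_five_disks_commute: "in_five_disks s t \<longleftrightarrow> in_five_disks t s"
  unfolding in_five_disks_def using hex_sqnorm_commute by metis

lemma hex_sqnorm_kite_le:
  assumes "in_kite s t"
  shows "hex_sqnorm s t \<le> 1/3"
proof -
  have "0 \<le> s * (1 - 2 * s - t)" "0 \<le> t * (1 - s - 2 * t)"
    using assms unfolding in_kite_def by simp_all
  then show ?thesis
    using assms unfolding hex_sqnorm_def in_kite_def by (simp add: algebra_simps)
qed

lemma hex_sqnorm_lower_slab:
  fixes s t :: real
  assumes "- 2/3 \<le> t" "t \<le> 0" "0 \<le> 2 * s + t" "2 * s + t \<le> 1"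
  shows "hex_sqnorm s t \<le> 1/3 \<or> hex_sqnorm (s - 1) (t + 1) \<le> 1/3"
proof -
  define L where "L = s + t/2"
  define y where "y = - t"
  have origin: "hex_sqnorm s t = L * L + 3/4 * (y * y)"
    unfolding hex_sqnorm_def L_def y_def by (simp add: algebra_simps)
  have corner: "hex_sqnorm (s - 1) (t + 1) = (1/2 - L) * (1/2 - L) + 3/4 * ((1 - y) * (1 - y))"
    unfolding hex_sqnorm_def L_def y_def by (simp add: algebra_simps)
  have L: "0 \<le> L" "L \<le> 1/2" and y: "0 \<le> y" "y \<le> 2/3"
    using assms unfolding L_def y_def by auto
  have parabola: "3 * (y * y) - 3 * y + 1 \<le> 1/3" if "1/3 \<le> y"
  proof -
    have "0 \<le> (y - 1/3) * (2/3 - y)" using that y by simp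
    moreover have "(y - 1/3) * (2/3 - y) = y - y * y - 2/9" by (simp add: field_simps)
    ultimately show ?thesis by linarith
  qed
  show ?thesis
  proof (cases "s - t \<le> 1")
    case True
    then have L_le: "L \<le> 1 - 3/2 * y" unfolding L_def y_def by simp
    show ?thesis
    proof (cases "y \<le> 1/3")
      case True
      have "L * L \<le> 1/2 * (1/2)" using L by (intro mult_mono) auto
      moreover have "y * y \<le> 1/3 * (1/3)" using y True by (intro mult_mono) auto
      ultimately show ?thesis using origin by auto
    next
      case False
      have "L * L \<le> (1 - 3/2 * y) * (1 - 3/2 * y)" using L L_le by (intro mult_mono) auto
      then have "hex_sqnorm s t \<le> 3 * (y * y) - 3 * y + 1" using origin by (simp add: algebra_simps)
      then show ?thesis using parabola False by auto
    qed
  next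
    case False
    then have L_ge: "1/2 - L \<le> 3/2 * y - 1/2" unfolding L_def y_def by simp
    then have "1/3 \<le> y" using L by simp
    have "(1/2 - L) * (1/2 - L) \<le> (3/2 * y - 1/2) * (3/2 * y - 1/2)"
      using L L_ge by (intro mult_mono) auto
    moreover have "(3/2 * y - 1/2) * (3/2 * y - 1/2) = 9/4 * (y * y) - 3/2 * y + 1/4"
      by (simp add: field_simps)
    moreover have "(1 - y) * (1 - y) = 1 - 2 * y + y * y" by (simp add: field_simps)
    ultimately have "hex_sqnorm (s - 1) (t + 1) \<le> 3 * (y * y) - 3 * y + 1"
      using corner by argo
    then show ?thesis using parabola \<open>1/3 \<le> y\<close> by auto
  qed
qed

lemma hex_sqnorm_right_slab:
  fixes s t :: real
  assumes "1 \<le> 2 * s + t" "0 \<le> t" "t \<le> 1/3" "(2 * s + t - 1) * (2 * s + t - 1) \<le> 4/3"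
  shows "hex_sqnorm (s - 1) t \<le> 1/3"
proof -
  define Y where "Y = 2 * s + t - 1"
  have form: "4 * hex_sqnorm (s - 1) t = (Y - 1) * (Y - 1) + 3 * (t * t)"
    unfolding hex_sqnorm_def Y_def by (simp add: field_simps)
  have Y: "0 \<le> Y" "Y * Y \<le> 4/3" using assms unfolding Y_def by auto
  have "Y \<le> 2"
  proof (rule ccontr)
    assume "\<not> Y \<le> 2"
    then have "2 * 2 < Y * Y" by (intro mult_strict_mono) auto
    then show False using Y by simp
  qed
  then have "0 \<le> Y * (2 - Y)" using Y by simp
  moreover have "t * t \<le> 1/3 * (1/3)" using assms by (intro mult_mono) auto
  ultimately show ?thesis using form by (simp add: algebra_simps)
qed

text \<open>The two cone lemmas are stated relative to the apex of the cone, the midpoint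
(1/2, 0) of an edge and the vertex (1/3, 1/3) of the Voronoi hexagon.\<close>

lemma hex_sqnorm_edge_cone:
  fixes x y :: real
  assumes "hex_sqnorm x y \<le> 1/3" "0 \<le> 2 * x + y" "y \<le> 0"
  shows "hex_sqnorm (x - 1/2) y \<le> 1/3 \<or> hex_sqnorm (x - 1/2) (y + 1) \<le> 1/3"
proof -
  define L where "L = x + y/2"
  define v where "v = - y"
  have apex: "hex_sqnorm x y = L * L + 3/4 * (v * v)"
    and right: "hex_sqnorm (x - 1/2) y = L * L - L + 1/4 + 3/4 * (v * v)"
    and corner: "hex_sqnorm (x - 1/2) (y + 1) = L * L + 3/4 - 3/2 * v + 3/4 * (v * v)"
    unfolding hex_sqnorm_def L_def v_def by (simp_all add: field_simps)
  have L: "0 \<le> L" "0 \<le> v" using assms unfolding L_def v_def by auto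
  show ?thesis
  proof (cases "0 \<le> x + 2 * y + 1/2")
    case True
    then have v_le: "v \<le> 2/3 * (L + 1/2)" unfolding L_def v_def by simp
    show ?thesis
    proof (cases "L \<le> 1/2")
      case True
      have "v * v \<le> (2/3 * (L + 1/2)) * (2/3 * (L + 1/2))" using v_le L by (intro mult_mono) auto
      moreover have "0 \<le> L * (1 - 2 * L)" using True L by simp
      ultimately show ?thesis using right by (simp add: algebra_simps)
    next
      case False
      then show ?thesis using apex right assms(1) by argo
    qed
  next
    case False
    then have L_le: "L \<le> 3/2 * v - 1/2" unfolding L_def v_def by simp
    show ?thesis
    proof (cases "v \<le> 2/3")
      case True
      have "L * L \<le> (3/2 * v - 1/2) * (3/2 * v - 1/2)" using L_le L by (intro mult_mono) auto
      moreover have "(3/2 * v - 1/2) * (3/2 * v - 1/2) = 9/4 * (v * v) - 3/2 * v + 1/4"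
        by (simp add: field_simps)
      moreover have "0 \<le> (v - 1/3) * (2/3 - v)" using True L_le L by simp
      moreover have "(v - 1/3) * (2/3 - v) = v - v * v - 2/9" by (simp add: field_simps)
      ultimately show ?thesis using corner by argo
    next
      case False
      then show ?thesis using apex corner assms(1) by argo
    qed
  qed
qed

lemma hex_sqnorm_vertex_cone:
  fixes x y :: real
  assumes "hex_sqnorm x y \<le> 1/3" "0 \<le> x" "0 \<le> y"
  shows "hex_sqnorm (x - 2/3) (y + 1/3) \<le> 1/3 \<or> hex_sqnorm (x + 1/3) (y - 2/3) \<le> 1/3"
proof -
  have shifted: "hex_sqnorm (a - 2/3) (b + 1/3) \<le> 1/3"
    if ab: "hex_sqnorm a b \<le> 1/3" "0 \<le> b" "b \<le> a" for a b :: real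
  proof -
    have "a * b \<le> a * a" "b * b \<le> a * a" using ab by (auto intro: mult_mono mult_left_mono)
    then have "hex_sqnorm a b \<le> 3 * (a * a)" unfolding hex_sqnorm_def by argo
    moreover have "hex_sqnorm a b * hex_sqnorm a b \<le> hex_sqnorm a b * (1/3)"
      using ab hex_sqnorm_nonneg[of a b] by (intro mult_left_mono) auto
    ultimately have "hex_sqnorm a b * hex_sqnorm a b \<le> a * a" by argo
    then have "hex_sqnorm a b \<le> a"
      using ab hex_sqnorm_nonneg[of a b] by (metis abs_le_square_iff abs_of_nonneg power2_eq_square order_trans)
    moreover have "hex_sqnorm (a - 2/3) (b + 1/3) = hex_sqnorm a b - a + 1/3"
      unfolding hex_sqnorm_def by (simp add: field_simps)
    ultimately show ?thesis by argo
  qed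
  show ?thesis
  proof (cases "y \<le> x")
    case True
    then show ?thesis using shifted[of x y] assms by auto
  next
    case False
    then have "hex_sqnorm (y - 2/3) (x + 1/3) \<le> 1/3"
      using shifted[of y x] assms hex_sqnorm_commute by auto
    then show ?thesis using hex_sqnorm_commute by metis
  qed
qed

lemma in_five_disks_opposite_cone:
  assumes "in_kite a b" "hex_sqnorm (s - a) (t - b) \<le> 1/3" "2 * s + t \<le> 0" "s + 2 * t \<le> 0"
  shows "in_five_disks s t"
proof -
  have "hex_sqnorm (s - a) (t - b) = hex_sqnorm s t - (a * (2 * s + t) + b * (s + 2 * t)) + hex_sqnorm a b"
    unfolding hex_sqnorm_def by (simp add: field_simps)
  moreover have "a * (2 * s + t) \<le> 0" "b * (s + 2 * t) \<le> 0"
    using assms unfolding in_kite_def by (auto intro: mult_nonneg_nonpos)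
  ultimately show ?thesis using assms hex_sqnorm_nonneg[of a b] unfolding in_five_disks_def by argo
qed

lemma in_five_disks_lower_slab:
  assumes "in_kite a b" "hex_sqnorm (s - a) (t - b) \<le> 1/3" "t \<le> 0" "0 \<le> 2 * s + t" "2 * s + t \<le> 1"
  shows "in_five_disks s t"
proof -
  have "(- t) * (- t) \<le> (b - t) * (b - t)"
    using assms unfolding in_kite_def by (intro mult_mono) auto
  then have "t * t \<le> (t - b) * (t - b)" by (simp add: algebra_simps)
  moreover have "0 \<le> (s - a + (t - b)/2) * (s - a + (t - b)/2)" by simp
  ultimately have tt: "t * t \<le> 4/9" using hex_sqnorm_square_form[of "s - a" "t - b"] assms(2) by argo
  have "- 2/3 \<le> t"
  proof (rule ccontr)
    assume "\<not> - 2/3 \<le> t"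
    then have "2/3 * (2/3) < (- t) * (- t)" by (intro mult_strict_mono) auto
    then show False using tt by simp
  qed
  from hex_sqnorm_lower_slab[OF this assms(3-5)] show ?thesis unfolding in_five_disks_def by auto
qed

lemma in_five_disks_lower_cone:
  assumes "in_kite a b" "hex_sqnorm (s - a) (t - b) \<le> 1/3" "1 \<le> 2 * s + t" "t \<le> 0"
  shows "in_five_disks s t"
proof -
  have "hex_sqnorm (s - a) (t - b) = hex_sqnorm (s - 1/2) t + ((1 - 2 * a - b)/2) * (2 * s + t - 1)
      - (3 * b / 2) * t + hex_sqnorm (a - 1/2) b"
    unfolding hex_sqnorm_def by (simp add: field_simps)
  moreover have "0 \<le> ((1 - 2 * a - b)/2) * (2 * s + t - 1)" "(3 * b / 2) * t \<le> 0"
    using assms unfolding in_kite_def by (auto intro: mult_nonneg_nonpos)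
  ultimately have "hex_sqnorm (s - 1/2) t \<le> 1/3"
    using assms hex_sqnorm_nonneg[of "a - 1/2" b] by argo
  from hex_sqnorm_edge_cone[OF this] assms
  have "hex_sqnorm (s - 1/2 - 1/2) t \<le> 1/3 \<or> hex_sqnorm (s - 1/2 - 1/2) (t + 1) \<le> 1/3" by auto
  then show ?thesis unfolding in_five_disks_def by auto
qed

lemma in_five_disks_right_slab:
  assumes "in_kite a b" "hex_sqnorm (s - a) (t - b) \<le> 1/3" "1 \<le> 2 * s + t" "0 \<le> t" "t \<le> 1/3"
  shows "in_five_disks s t"
proof -
  have "0 \<le> 2 * s + t - 1" "2 * s + t - 1 \<le> 2 * (s - a) + (t - b)"
    using assms unfolding in_kite_def by auto
  then have "(2 * s + t - 1) * (2 * s + t - 1) \<le> (2 * (s - a) + (t - b)) * (2 * (s - a) + (t - b))"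
    by (intro mult_mono) auto
  moreover have "(2 * (s - a) + (t - b)) * (2 * (s - a) + (t - b))
      = 4 * ((s - a + (t - b)/2) * (s - a + (t - b)/2))"
    by (simp add: field_simps)
  moreover have "0 \<le> 3/4 * ((t - b) * (t - b))" by simp
  ultimately have "(2 * s + t - 1) * (2 * s + t - 1) \<le> 4/3"
    using hex_sqnorm_square_form[of "s - a" "t - b"] assms(2) by argo
  from hex_sqnorm_right_slab[OF assms(3-5) this] show ?thesis unfolding in_five_disks_def by auto
qed

lemma in_five_disks_upper_cone:
  assumes "in_kite a b" "hex_sqnorm (s - a) (t - b) \<le> 1/3" "1/3 \<le> s" "1/3 \<le> t"
  shows "in_five_disks s t"
proof -
  have "hex_sqnorm (s - a) (t - b) = hex_sqnorm (s - 1/3) (t - 1/3) + (s - 1/3) * (1 - 2 * a - b)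
      + (t - 1/3) * (1 - a - 2 * b) + hex_sqnorm (a - 1/3) (b - 1/3)"
    unfolding hex_sqnorm_def by (simp add: field_simps)
  moreover have "0 \<le> (s - 1/3) * (1 - 2 * a - b)" "0 \<le> (t - 1/3) * (1 - a - 2 * b)"
    using assms unfolding in_kite_def by (auto intro!: mult_nonneg_nonneg)
  ultimately have "hex_sqnorm (s - 1/3) (t - 1/3) \<le> 1/3"
    using assms hex_sqnorm_nonneg[of "a - 1/3" "b - 1/3"] by argo
  from hex_sqnorm_vertex_cone[OF this] assms
  have "hex_sqnorm (s - 1/3 - 2/3) (t - 1/3 + 1/3) \<le> 1/3 \<or> hex_sqnorm (s - 1/3 + 1/3) (t - 1/3 - 2/3) \<le> 1/3"
    by auto
  then have "hex_sqnorm (s - 1) t \<le> 1/3 \<or> hex_sqnorm s (t - 1) \<le> 1/3" by simp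
  then show ?thesis unfolding in_five_disks_def by blast
qed

text \<open>The regions above cover the half-plane t \<le> s; the other half follows by the
symmetry (s, t) \<mapsto> (t, s).\<close>

lemma in_five_disks_of_kite_centre_below_diagonal:
  assumes "in_kite a b" "hex_sqnorm (s - a) (t - b) \<le> 1/3" "t \<le> s"
  shows "in_five_disks s t"
proof -
  consider "2 * s + t \<le> 0" "s + 2 * t \<le> 0" | "t \<le> 0" "0 \<le> 2 * s + t" "2 * s + t \<le> 1"
    | "t \<le> 0" "1 \<le> 2 * s + t" | "in_kite s t" | "1 \<le> 2 * s + t" "0 \<le> t" "t \<le> 1/3"
    | "1/3 \<le> s" "1/3 \<le> t"
    using assms(3) unfolding in_kite_def by linarith
  then show ?thesis
  proof cases
    case 4
    then show ?thesis using hex_sqnorm_kite_le unfolding in_five_disks_def by blast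
  qed (use assms in_five_disks_opposite_cone in_five_disks_lower_slab in_five_disks_lower_cone
      in_five_disks_right_slab in_five_disks_upper_cone in blast)+
qed

lemma in_five_disks_of_kite_centre:
  assumes "in_kite a b" "hex_sqnorm (s - a) (t - b) \<le> 1/3"
  shows "in_five_disks s t"
proof (cases "t \<le> s")
  case True
  then show ?thesis by (rule in_five_disks_of_kite_centre_below_diagonal[OF assms])
next
  case False
  have "in_kite b a" "hex_sqnorm (t - b) (s - a) \<le> 1/3"
    using assms in_kite_commute hex_sqnorm_commute by auto
  then have "in_five_disks t s" using False by (intro in_five_disks_of_kite_centre_below_diagonal) auto
  then show ?thesis using in_five_disks_commute by blast
qed

section \<open>Reduction to the kite by symmetry\<close>

definition disk_coverable_by_five :: "real \<Rightarrow> real \<Rightarrow> bool" where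
  "disk_coverable_by_five a b \<longleftrightarrow> (\<exists>Z :: (int \<times> int) set. finite Z \<and> card Z \<le> 5 \<and>
     (\<forall>s t. hex_sqnorm (s - a) (t - b) \<le> 1/3 \<longrightarrow>
        (\<exists>(i, j)\<in>Z. hex_sqnorm (s - of_int i) (t - of_int j) \<le> 1/3)))"

lemma disk_coverable_by_five_kite:
  assumes "in_kite a b"
  shows "disk_coverable_by_five a b"
  unfolding disk_coverable_by_five_def
proof (intro exI conjI allI impI)
  let ?Z = "{(0, 0), (1, 0), (0, 1), (1, - 1), (- 1, 1)} :: (int \<times> int) set"
  show "finite ?Z" by simp
  show "card ?Z \<le> 5" by (rule order_trans[OF card_insert_le_m1]) auto
  show "\<exists>(i, j)\<in>?Z. hex_sqnorm (s - of_int i) (t - of_int j) \<le> 1/3"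
    if "hex_sqnorm (s - a) (t - b) \<le> 1/3" for s t
    using in_five_disks_of_kite_centre[OF assms that] unfolding in_five_disks_def by auto
qed

lemma disk_coverable_by_five_translate:
  assumes "disk_coverable_by_five a b"
  shows "disk_coverable_by_five (a + of_int m) (b + of_int n)"
proof -
  obtain Z where Z: "finite Z" "card Z \<le> 5"
    "\<And>s t. hex_sqnorm (s - a) (t - b) \<le> 1/3 \<Longrightarrow> \<exists>(i, j)\<in>Z. hex_sqnorm (s - of_int i) (t - of_int j) \<le> 1/3"
    using assms unfolding disk_coverable_by_five_def by blast
  define shift where "shift = (\<lambda>(i, j). (i + m, j + n))"
  have "\<exists>(i, j)\<in>shift ` Z. hex_sqnorm (s - of_int i) (t - of_int j) \<le> 1/3"
    if "hex_sqnorm (s - (a + of_int m)) (t - (b + of_int n)) \<le> 1/3" for s t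
  proof -
    have "hex_sqnorm (s - of_int m - a) (t - of_int n - b) \<le> 1/3"
      using that by (simp add: algebra_simps)
    then obtain i j where "(i, j) \<in> Z" "hex_sqnorm (s - of_int m - of_int i) (t - of_int n - of_int j) \<le> 1/3"
      using Z(3) by blast
    then show ?thesis unfolding shift_def by (intro bexI[of _ "(i + m, j + n)"]) (auto simp: algebra_simps)
  qed
  then show ?thesis
    unfolding disk_coverable_by_five_def using Z card_image_le[OF Z(1), of shift] by (meson finite_imageI le_trans)
qed

text \<open>(x, y) \<mapsto> (- y, x + y) is multiplication by cis(pi/3) in lattice coordinates.\<close>

lemma disk_coverable_by_five_rotate:
  assumes "disk_coverable_by_five a b"
  shows "disk_coverable_by_five (- b) (a + b)"
proof -
  obtain Z where Z: "finite Z" "card Z \<le> 5"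
    "\<And>s t. hex_sqnorm (s - a) (t - b) \<le> 1/3 \<Longrightarrow> \<exists>(i, j)\<in>Z. hex_sqnorm (s - of_int i) (t - of_int j) \<le> 1/3"
    using assms unfolding disk_coverable_by_five_def by blast
  define rot where "rot = (\<lambda>(i :: int, j). (- j, i + j))"
  have "\<exists>(i, j)\<in>rot ` Z. hex_sqnorm (s - of_int i) (t - of_int j) \<le> 1/3"
    if "hex_sqnorm (s - - b) (t - (a + b)) \<le> 1/3" for s t
  proof -
    have "s - - b = - (- s - b)" "t - (a + b) = (s + t - a) + (- s - b)" by simp_all
    then have "hex_sqnorm (s + t - a) (- s - b) \<le> 1/3"
      using that by (simp only: hex_sqnorm_rotate)
    then obtain i j where "(i, j) \<in> Z" "hex_sqnorm (s + t - of_int i) (- s - of_int j) \<le> 1/3"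
      using Z(3)[of "s + t" "- s"] by (auto simp: algebra_simps)
    moreover have "s - of_int (- j) = - (- s - of_int j)"
      "t - of_int (i + j) = (s + t - of_int i) + (- s - of_int j)" by simp_all
    then have "hex_sqnorm (s - of_int (- j)) (t - of_int (i + j)) = hex_sqnorm (s + t - of_int i) (- s - of_int j)"
      by (simp only: hex_sqnorm_rotate)
    ultimately show ?thesis unfolding rot_def by (intro bexI[of _ "(- j, i + j)"]) auto
  qed
  then show ?thesis
    unfolding disk_coverable_by_five_def using Z card_image_le[OF Z(1), of rot] by (meson finite_imageI le_trans)
qed

lemma disk_coverable_by_five_rotations:
  assumes "disk_coverable_by_five a b"
  shows "disk_coverable_by_five (- a - b) a" "disk_coverable_by_five (- a) (- b)"
    "disk_coverable_by_five b (- a - b)" "disk_coverable_by_five (a + b) (- a)"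
proof -
  note rotate = disk_coverable_by_five_rotate
  show 2: "disk_coverable_by_five (- a - b) a"
    using rotate[OF rotate[OF assms]] by (simp add: algebra_simps)
  show 3: "disk_coverable_by_five (- a) (- b)"
    using rotate[OF 2] by (simp add: algebra_simps)
  show 4: "disk_coverable_by_five b (- a - b)"
    using rotate[OF 3] by (simp add: algebra_simps)
  show "disk_coverable_by_five (a + b) (- a)"
    using rotate[OF 4] by (simp add: algebra_simps)
qed

text \<open>The unit square of the lattice is tiled by six kites, each a rotated copy of the
standard kite at one of its corners.\<close>

lemma disk_coverable_by_five_unit_square:
  assumes "0 \<le> a" "a \<le> 1" "0 \<le> b" "b \<le> 1"
  shows "disk_coverable_by_five a b"
proof -
  have translate: "disk_coverable_by_five a b"
    if "disk_coverable_by_five (a - of_int m) (b - of_int n)" for m n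
    using disk_coverable_by_five_translate[OF that, of m n] by simp
  consider "in_kite a b" | "in_kite b (1 - a - b)" | "in_kite (1 - a - b) a"
    | "in_kite (1 - a) (1 - b)" | "in_kite (a + b - 1) (1 - a)" | "in_kite (1 - b) (a + b - 1)"
    using assms unfolding in_kite_def by argo
  then show ?thesis
  proof cases
    case 1
    then show ?thesis by (rule disk_coverable_by_five_kite)
  next
    case 2
    show ?thesis
      using disk_coverable_by_five_rotations(1)[OF disk_coverable_by_five_kite[OF 2]]
      by (intro translate[of 1 0]) (simp add: algebra_simps)
  next
    case 3
    show ?thesis
      using disk_coverable_by_five_rotations(3)[OF disk_coverable_by_five_kite[OF 3]]
      by (intro translate[of 0 1]) (simp add: algebra_simps)
  next
    case 4
    show ?thesis
      using disk_coverable_by_five_rotations(2)[OF disk_coverable_by_five_kite[OF 4]]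
      by (intro translate[of 1 1]) (simp add: algebra_simps)
  next
    case 5
    show ?thesis
      using disk_coverable_by_five_rotate[OF disk_coverable_by_five_kite[OF 5]]
      by (intro translate[of 1 0]) (simp add: algebra_simps)
  next
    case 6
    show ?thesis
      using disk_coverable_by_five_rotations(4)[OF disk_coverable_by_five_kite[OF 6]]
      by (intro translate[of 0 1]) (simp add: algebra_simps)
  qed
qed

lemma disk_coverable_by_five: "disk_coverable_by_five a b"
proof -
  have "disk_coverable_by_five (a - of_int \<lfloor>a\<rfloor>) (b - of_int \<lfloor>b\<rfloor>)"
    by (rule disk_coverable_by_five_unit_square) linarith+
  from disk_coverable_by_five_translate[OF this, of "\<lfloor>a\<rfloor>" "\<lfloor>b\<rfloor>"] show ?thesis by simp
qed

section \<open>Lattice coordinates in the plane\<close>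

definition hex_point :: "real \<Rightarrow> complex \<Rightarrow> real \<Rightarrow> real \<Rightarrow> real \<Rightarrow> complex" where
  "hex_point r c th x y = c + cis th * (complex_of_real x * complex_of_real (sqrt 3 * r)
      + complex_of_real y * complex_of_real (sqrt 3 * r) * cis (pi / 3))"

lemma hex_point_of_int_in_hex_centers: "hex_point r c th (of_int i) (of_int j) \<in> hex_centers r c th"
  unfolding hex_point_def hex_centers_def by auto

lemma norm_lattice_vector_squared:
  "(cmod (complex_of_real x + complex_of_real y * cis (pi / 3)))\<^sup>2 = hex_sqnorm x y"
proof -
  have re: "Re (complex_of_real x + complex_of_real y * cis (pi / 3)) = x + y / 2"
    and im: "Im (complex_of_real x + complex_of_real y * cis (pi / 3)) = y * (sqrt 3 / 2)"
    by (simp_all add: cos_60 sin_60)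
  have "(x + y / 2)\<^sup>2 + (y * (sqrt 3 / 2))\<^sup>2 = hex_sqnorm x y"
    unfolding hex_sqnorm_def power2_eq_square
    by (simp add: field_simps real_sqrt_mult_self[of 3, simplified])
  then show ?thesis unfolding cmod_power2 re im .
qed

lemma hex_point_dist_squared:
  "(dist (hex_point r c th x y) (hex_point r c th x' y'))\<^sup>2 = 3 * r\<^sup>2 * hex_sqnorm (x - x') (y - y')"
proof -
  have "hex_point r c th x y - hex_point r c th x' y' = cis th * complex_of_real (sqrt 3 * r) *
      (complex_of_real (x - x') + complex_of_real (y - y') * cis (pi / 3))"
    unfolding hex_point_def by (simp add: algebra_simps)
  then have "dist (hex_point r c th x y) (hex_point r c th x' y')
      = \<bar>sqrt 3 * r\<bar> * cmod (complex_of_real (x - x') + complex_of_real (y - y') * cis (pi / 3))"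
    by (simp add: dist_norm norm_mult abs_mult)
  then show ?thesis
    using norm_lattice_vector_squared[of "x - x'" "y - y'"] by (simp add: power_mult_distrib)
qed

lemma hex_point_surj:
  assumes "r \<noteq> 0"
  shows "\<exists>x y. hex_point r c th x y = z"
proof -
  define K where "K = cis th * complex_of_real (sqrt 3 * r)"
  define w where "w = (z - c) / K"
  define y where "y = Im w * 2 / sqrt 3"
  define x where "x = Re w - y / 2"
  have "K \<noteq> 0" unfolding K_def using assms by simp
  have coords: "complex_of_real x + complex_of_real y * cis (pi / 3) = w"
    by (rule complex_eqI) (simp_all add: x_def y_def cos_60 sin_60 field_simps)
  have "hex_point r c th x y = c + K * (complex_of_real x + complex_of_real y * cis (pi / 3))"
    unfolding hex_point_def K_def by (simp add: algebra_simps)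
  also have "\<dots> = z" unfolding coords w_def using \<open>K \<noteq> 0\<close> by simp
  finally show ?thesis by blast
qed

lemma hex_point_in_cball_iff:
  assumes "r > 0"
  shows "hex_point r c th x y \<in> cball (hex_point r c th a b) r \<longleftrightarrow> hex_sqnorm (x - a) (y - b) \<le> 1/3"
proof -
  have "hex_point r c th x y \<in> cball (hex_point r c th a b) r
      \<longleftrightarrow> (dist (hex_point r c th x y) (hex_point r c th a b))\<^sup>2 \<le> r\<^sup>2"
    using assms by (simp add: dist_commute power2_le_iff_abs_le)
  also have "\<dots> \<longleftrightarrow> hex_sqnorm (x - a) (y - b) \<le> 1/3"
    using assms unfolding hex_point_dist_squared by (simp add: field_simps)
  finally show ?thesis .
qed

theorem lemma4:
  fixes r th :: real and c p :: complex
  assumes "r > 0"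
  shows "\<exists>S. S \<subseteq> hex_centers r c th \<and> finite S \<and> card S \<le> 5 \<and>
             cball p r \<subseteq> (\<Union>z\<in>S. grid_circle r z)"
proof -
  obtain a b where p: "p = hex_point r c th a b" using hex_point_surj assms by (metis less_irrefl)
  obtain Z where Z: "finite Z" "card Z \<le> 5"
    "\<And>s t. hex_sqnorm (s - a) (t - b) \<le> 1/3 \<Longrightarrow> \<exists>(i, j)\<in>Z. hex_sqnorm (s - of_int i) (t - of_int j) \<le> 1/3"
    using disk_coverable_by_five[of a b] unfolding disk_coverable_by_five_def by blast
  define centre where "centre = (\<lambda>(i :: int, j :: int). hex_point r c th (of_int i) (of_int j))"
  have "cball p r \<subseteq> (\<Union>z\<in>centre ` Z. grid_circle r z)"
  proof
    fix w assume "w \<in> cball p r"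
    moreover obtain s t where w: "w = hex_point r c th s t" using hex_point_surj assms by (metis less_irrefl)
    ultimately obtain i j where "(i, j) \<in> Z" "hex_sqnorm (s - of_int i) (t - of_int j) \<le> 1/3"
      using Z(3) hex_point_in_cball_iff[OF assms] p by blast
    then show "w \<in> (\<Union>z\<in>centre ` Z. grid_circle r z)"
      unfolding grid_circle_def centre_def w using hex_point_in_cball_iff[OF assms] by force
  qed
  moreover have "centre ` Z \<subseteq> hex_centers r c th"
    unfolding centre_def using hex_point_of_int_in_hex_centers by auto
  ultimately show ?thesis using Z card_image_le[OF Z(1), of centre] by (meson finite_imageI le_trans)
qed

end
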